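(* Let $\iota:M(\mathbb R(y))\to M(\mathbb R(x,y))$ be an injective map compatible with restriction such that all places in the image of $\iota$ have the same restriction to $\mathbb R(x)$. Suppose that for some $\xi\in\mathrm{im}(\iota)$ with $\xi(x)=a\in\mathbb R$ and $\xi(y)=b\in\mathbb R$ there is $n\in\mathbb N$ with $0<v_\xi(x-a)<n\,v_\xi(y-b)$. Then $\iota$ is not continuous. The same holds if $\xi(x)=\infty$ and $x-a$ is replaced by $1/x$, and/or $\xi(y)=\infty$ and $y-b$ is replaced by $1/y$.
   Context: For a field $K$, $M(K)$ is the set of $\mathbb R$-places $K\to\mathbb R\cup\{\infty\}$, with topology generated by the subbasis $H'(b)=\{\zeta\in M(K)\mid \infty\ne\zeta(b)>0\}$, $b\in K$. $\iota$ is compatible with restriction if $\iota(\zeta)|_{\mathbb R(y)}=\zeta$ for all $\zeta$. $v_\xi$ denotes the valuation associated with the place $\xi$, with values in an ordered abelian group. *)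

theory Defs
  imports "HOL-Analysis.Analysis" "HOL-Computational_Algebra.Polynomial" "HOL-Computational_Algebra.Fraction_Field"
begin

text \<open>R-places K \<rightarrow> R \<union> {\<infinity>}; \<infinity> is represented by None.
  The preimage of R is a valuation ring, and the place is a ring homomorphism on it
  whose kernel is its maximal ideal.\<close>
definition real_place :: "('k::field \<Rightarrow> real option) \<Rightarrow> bool" where
  "real_place \<phi> \<longleftrightarrow>
     \<phi> 0 = Some 0 \<and> \<phi> 1 = Some 1 \<and>
     (\<forall>a b. \<phi> a \<noteq> None \<and> \<phi> b \<noteq> None \<longrightarrow>
        \<phi> (a + b) = Some (the (\<phi> a) + the (\<phi> b)) \<and>
        \<phi> (a * b) = Some (the (\<phi> a) * the (\<phi> b))) \<and>
     (\<forall>a. a \<noteq> 0 \<longrightarrow> (\<phi> a = None \<longleftrightarrow> \<phi> (inverse a) = Some 0))"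

definition places :: "('k::field \<Rightarrow> real option) set" where
  "places = {\<phi>. real_place \<phi>}"

definition Hsub :: "'k::field \<Rightarrow> ('k \<Rightarrow> real option) set" where
  "Hsub b = {\<zeta> \<in> places. \<exists>r. \<zeta> b = Some r \<and> r > 0}"

definition place_topology :: "('k::field \<Rightarrow> real option) topology" where
  "place_topology = topology_generated_by (range Hsub)"

text \<open>Strict comparison of values of the valuation v_\<xi> attached to the place \<xi>:
  val_less \<xi> f g means v_\<xi>(f) < v_\<xi>(g) (with v_\<xi>(0) = \<infinity>), i.e. g/f lies in the
  maximal ideal of the valuation ring of \<xi>.\<close>
definition val_less :: "('k::field \<Rightarrow> real option) \<Rightarrow> 'k \<Rightarrow> 'k \<Rightarrow> bool" where
  "val_less \<xi> f g \<longleftrightarrow> f \<noteq> 0 \<and> \<xi> (g / f) = Some 0"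

text \<open>R(y) = Frac(R[y]); R(x,y) = Frac(R(y)[x]).\<close>
type_synonym Ry = "real poly fract"
type_synonym Rxy = "Ry poly fract"

definition y1 :: Ry where "y1 = Fract [:0, 1:] 1"
definition const1 :: "real \<Rightarrow> Ry" where "const1 c = Fract [:c:] 1"

definition emb_y :: "Ry \<Rightarrow> Rxy" where "emb_y f = Fract [:f:] 1"

definition xvar :: Rxy where "xvar = Fract [:0, 1:] 1"
definition yvar :: Rxy where "yvar = emb_y y1"
definition const2 :: "real \<Rightarrow> Rxy" where "const2 c = emb_y (const1 c)"

definition Rx_sub :: "Rxy set" where
  "Rx_sub = {Fract (map_poly const1 p) (map_poly const1 q) | p q. q \<noteq> 0}"

definition loc_par :: "(Rxy \<Rightarrow> real option) \<Rightarrow> Rxy \<Rightarrow> Rxy" where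
  "loc_par \<xi> t = (case \<xi> t of Some a \<Rightarrow> t - const2 a | None \<Rightarrow> inverse t)"

end

theory Submission
  imports Defs "HOL-Computational_Algebra.Normalized_Fraction"
    "HOL-Computational_Algebra.Polynomial_Factorial" "HOL-Computational_Algebra.Field_as_Ring"
begin

text \<open>Suppose \<open>\<iota>\<close> is continuous, and let \<open>\<xi> = \<iota> \<zeta>\<close>, with local parameters \<open>X\<close> and \<open>Y\<close> at \<open>x\<close>
  and \<open>y\<close>. Then \<open>f = 1 - Y\<^sup>n / X\<close> has \<open>\<xi>(f) = 1\<close>, so \<open>\<iota>\<^sup>-\<^sup>1(H'(f))\<close> is an open
  neighbourhood of \<open>\<zeta>\<close>. Writing \<open>u\<close> for the local parameter of \<open>y\<close> at \<open>\<zeta>\<close>, every element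
  of \<open>\<real>(y)\<close> is a quotient of real polynomials in \<open>u\<close>; hence the evaluation places
  \<open>\<zeta>\<^sub>t\<close> with \<open>\<zeta>\<^sub>t(u) = t\<close> converge to \<open>\<zeta>\<close> as \<open>t \<rightarrow> 0\<close>, and \<open>\<iota>(\<zeta>\<^sub>t) \<in> H'(f)\<close> for some
  \<open>t \<noteq> 0\<close>. But \<open>\<iota>(\<zeta>\<^sub>t)\<close> agrees with \<open>\<xi>\<close> on \<open>\<real>(x)\<close>, so it sends \<open>X\<close> to \<open>0\<close> while it
  sends \<open>Y\<close> to \<open>t \<noteq> 0\<close>; thus it sends \<open>f\<close> to \<open>\<infinity>\<close>.\<close>

section \<open>Real places\<close>

locale R_place =
  fixes \<phi> :: "'k::field \<Rightarrow> real option"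
  assumes real_place: "real_place \<phi>"
begin

lemma zero: "\<phi> 0 = Some 0" and one: "\<phi> 1 = Some 1"
  using real_place unfolding real_place_def by auto

lemma add: "\<phi> a = Some s \<Longrightarrow> \<phi> b = Some t \<Longrightarrow> \<phi> (a + b) = Some (s + t)"
  using real_place unfolding real_place_def by force

lemma mult: "\<phi> a = Some s \<Longrightarrow> \<phi> b = Some t \<Longrightarrow> \<phi> (a * b) = Some (s * t)"
  using real_place unfolding real_place_def by force

lemma None_iff_inverse: "a \<noteq> 0 \<Longrightarrow> \<phi> a = None \<longleftrightarrow> \<phi> (inverse a) = Some 0"
  using real_place unfolding real_place_def by blast

lemma nonzero: "\<phi> a = Some s \<Longrightarrow> s \<noteq> 0 \<Longrightarrow> a \<noteq> 0"
  using zero by auto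

lemma minus_one: "\<phi> (-1) = Some (-1)"
proof (cases "\<phi> (-1)")
  case None
  then show ?thesis using None_iff_inverse[of "-1"] by simp
next
  case (Some s)
  then have "\<phi> (1 + -1) = Some (1 + s)" using add one by blast
  then show ?thesis using zero Some by simp
qed

lemma uminus: "\<phi> a = Some s \<Longrightarrow> \<phi> (- a) = Some (- s)"
  using mult[OF minus_one, of a s] by simp

lemma diff: "\<phi> a = Some s \<Longrightarrow> \<phi> b = Some t \<Longrightarrow> \<phi> (a - b) = Some (s - t)"
  using add[of a s "- b" "- t"] uminus[of b t] by simp

lemma power: "\<phi> a = Some s \<Longrightarrow> \<phi> (a ^ n) = Some (s ^ n)"
  by (induction n) (simp_all add: one mult)

lemma of_nat: "\<phi> (of_nat n) = Some (of_nat n)"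
  by (induction n) (simp_all add: zero one add)

lemma inverse: "\<phi> a = Some s \<Longrightarrow> s \<noteq> 0 \<Longrightarrow> \<phi> (inverse a) = Some (inverse s)"
proof -
  assume a: "\<phi> a = Some s" "s \<noteq> 0"
  then have "a \<noteq> 0" by (rule nonzero)
  show ?thesis
  proof (cases "\<phi> (inverse a)")
    case None
    then show ?thesis using None_iff_inverse[of "inverse a"] \<open>a \<noteq> 0\<close> a by simp
  next
    case (Some r)
    have "\<phi> (a * inverse a) = Some (s * r)" using mult[OF a(1) Some] .
    then have "s * r = 1" using \<open>a \<noteq> 0\<close> one by simp
    then show ?thesis using Some a(2) by (simp add: field_simps)
  qed
qed

lemma divide: "\<phi> a = Some s \<Longrightarrow> \<phi> b = Some t \<Longrightarrow> t \<noteq> 0 \<Longrightarrow> \<phi> (a / b) = Some (s / t)"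
  using mult[OF _ inverse] by (simp add: divide_inverse)

lemma inverse_of_zero: "a \<noteq> 0 \<Longrightarrow> \<phi> a = Some 0 \<Longrightarrow> \<phi> (inverse a) = None"
  using None_iff_inverse[of "inverse a"] by simp

lemma inverse_of_None: "\<phi> a = None \<Longrightarrow> \<phi> (inverse a) = Some 0"
  using None_iff_inverse[of a] zero by fastforce

lemma add_None: "\<phi> a = None \<Longrightarrow> \<phi> b = Some t \<Longrightarrow> \<phi> (a + b) = None"
proof (rule ccontr)
  assume "\<phi> a = None" "\<phi> b = Some t" "\<phi> (a + b) \<noteq> None"
  then obtain s where "\<phi> (a + b) = Some s" by blast
  from diff[OF this \<open>\<phi> b = Some t\<close>] \<open>\<phi> a = None\<close> show False by simp
qed

lemma mult_right_cancel: "\<phi> (a * b) = Some s \<Longrightarrow> \<phi> b = Some t \<Longrightarrow> t \<noteq> 0 \<Longrightarrow> \<phi> a = Some (s / t)"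
  using divide[of "a * b" s b t] nonzero[of b t] by simp

lemma mult_None: "\<phi> a = None \<Longrightarrow> \<phi> b = Some t \<Longrightarrow> t \<noteq> 0 \<Longrightarrow> \<phi> (a * b) = None"
  using mult_right_cancel[of a b] by (cases "\<phi> (a * b)") auto

lemma mult_None_None: "\<phi> a = None \<Longrightarrow> \<phi> b = None \<Longrightarrow> \<phi> (a * b) = None"
proof -
  assume "\<phi> a = None" "\<phi> b = None"
  then have "\<phi> (inverse (a * b)) = Some 0"
    using mult[OF inverse_of_None inverse_of_None] by (simp add: mult.commute)
  moreover have "a * b \<noteq> 0" using \<open>\<phi> a = None\<close> \<open>\<phi> b = None\<close> zero by auto
  ultimately show ?thesis using None_iff_inverse by blast
qed

lemma one_plus_square: "\<phi> (1 + a * a) \<noteq> Some 0"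
proof (cases "\<phi> a")
  case None
  then show ?thesis using add_None[OF mult_None_None one] by (simp add: add.commute)
next
  case (Some s)
  then have "\<phi> (1 + a * a) = Some (1 + s * s)" using add[OF one mult] by blast
  moreover have "1 + s * s \<noteq> 0" by (metis add_pos_nonneg zero_less_one zero_le_square less_irrefl)
  ultimately show ?thesis by simp
qed

lemma one_minus_divide_pole:
  assumes "\<phi> a = Some 0" "a \<noteq> 0" "\<phi> b = Some s" "s \<noteq> 0"
  shows "\<phi> (1 - b / a) = None"
proof -
  have "\<phi> (a / b) = Some 0" using divide[OF assms(1,3,4)] by simp
  moreover have "a / b \<noteq> 0" using assms(2) nonzero[OF assms(3,4)] by simp
  ultimately have "\<phi> (b / a) = None" using inverse_of_zero[of "a / b"] by simp
  then have "\<phi> (b / a * -1 + 1) = None" using add_None[OF mult_None[OF _ minus_one] one] by simp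
  moreover have "b / a * -1 + 1 = 1 - b / a" by simp
  ultimately show ?thesis by simp
qed

end

lemma real_ring_endomorphism_id:
  fixes g :: "real \<Rightarrow> real"
  assumes add: "\<And>a b. g (a + b) = g a + g b" and mult: "\<And>a b. g (a * b) = g a * g b"
    and one: "g 1 = 1"
  shows "g c = c"
proof -
  have zero: "g 0 = 0" using add[of 0 0] by simp
  have minus: "g (- a) = - g a" for a using add[of a "- a"] zero by simp
  have nat: "g (of_nat k) = of_nat k" for k by (induction k) (simp_all add: add one zero)
  have int: "g (of_int k) = of_int k" for k
    by (cases k) (simp_all only: of_int_of_nat_eq of_int_minus nat minus)
  have rat: "g q = q" if "q \<in> \<rat>" for q
  proof -
    obtain a b where ab: "b > 0" "q = of_int a / of_int b" using \<open>q \<in> \<rat>\<close> by (auto elim!: Rats_cases')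
    then have "q * of_int b = of_int a" by simp
    then have "g q * of_int b = of_int a" using mult[of q "of_int b"] int by metis
    then have "g q = of_int a / of_int b" using ab(1) by (simp add: field_simps)
    with ab(2) show ?thesis by simp
  qed
  have mono: "g a \<le> g b" if "a \<le> b" for a b
  proof -
    have "sqrt (b - a) * sqrt (b - a) = b - a" using that by simp
    then have "g (b - a) = g (sqrt (b - a)) ^ 2" using mult by (metis power2_eq_square)
    then show ?thesis using add[of a "b - a"] by simp
  qed
  show ?thesis
  proof (rule linorder_cases[of "g c" c])
    assume "g c < c"
    then obtain q where "q \<in> \<rat>" "g c < q" "q < c" using Rats_dense_in_real by blast
    then show ?thesis using mono[of q c] rat by simp
  next
    assume "c < g c"
    then obtain q where "q \<in> \<rat>" "c < q" "q < g c" using Rats_dense_in_real by blast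
    then show ?thesis using mono[of c q] rat by simp
  qed
qed

lemma const1_add: "const1 (a + b) = const1 a + const1 b"
  by (simp add: const1_def)

lemma const1_mult: "const1 (a * b) = const1 a * const1 b"
  by (simp add: const1_def mult.commute)

lemma const1_0 [simp]: "const1 0 = 0"
  by (simp add: const1_def Zero_fract_def)

lemma const1_1 [simp]: "const1 1 = 1"
  by (simp add: const1_def One_fract_def one_pCons)

lemma const1_uminus: "const1 (- a) = - const1 a"
  by (simp add: const1_def)

lemma const1_inverse: "const1 (inverse a) = inverse (const1 a)"
  by (cases "a = 0") (simp_all add: const1_def eq_fract)

lemma const1_of_nat: "const1 (of_nat n) = of_nat n"
  by (induction n) (simp_all add: const1_add)

locale Ry_place = R_place \<phi> for \<phi> :: "Ry \<Rightarrow> real option"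
begin

text \<open>If \<open>c \<mapsto> \<infinity>\<close> then \<open>1/c\<^sup>2 \<mapsto> 0\<close>; writing \<open>N/c\<^sup>2 = 1 + r\<^sup>2\<close> for a large integer \<open>N\<close> would
  give \<open>1 + r\<^sup>2 \<mapsto> 0\<close>.\<close>
lemma const1_finite: "\<phi> (const1 c) \<noteq> None"
proof
  assume inf: "\<phi> (const1 c) = None"
  then have "c \<noteq> 0" using zero by auto
  obtain N :: nat where N: "c\<^sup>2 \<le> real N" using real_arch_simple by blast
  define r where "r = sqrt (real N - c\<^sup>2) / c"
  have "1 + r * r = real N * inverse c * inverse c"
    using N \<open>c \<noteq> 0\<close> unfolding r_def by (simp add: field_simps power2_eq_square)
  then have "1 + const1 r * const1 r = of_nat N * inverse (const1 c) * inverse (const1 c)"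
    by (metis const1_1 const1_add const1_mult const1_inverse const1_of_nat)
  moreover have "\<phi> (of_nat N * inverse (const1 c) * inverse (const1 c)) = Some 0"
    using mult[OF mult[OF of_nat inverse_of_None[OF inf]] inverse_of_None[OF inf]] by simp
  ultimately show False using one_plus_square[of "const1 r"] by simp
qed

text \<open>A place of \<open>\<real>(y)\<close> is a ring endomorphism of \<open>\<real>\<close> on the constants, hence the identity.\<close>
lemma const1: "\<phi> (const1 c) = Some c"
proof -
  define g where "g c = the (\<phi> (const1 c))" for c
  have g: "\<phi> (const1 c) = Some (g c)" for c
    using const1_finite[of c] unfolding g_def by auto
  have "g c = c"
  proof (rule real_ring_endomorphism_id)
    show "g (a + b) = g a + g b" for a b using add[OF g g, of a b] g[of "a + b"] by (simp add: const1_add)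
    show "g (a * b) = g a * g b" for a b using mult[OF g g, of a b] g[of "a * b"] by (simp add: const1_mult)
    show "g 1 = 1" using one g[of 1] by simp
  qed
  then show ?thesis using g by simp
qed

end

lemma Ry_placeI: "real_place \<phi> \<Longrightarrow> Ry_place \<phi>"
  by (simp add: Ry_place_def R_place_def)

definition peval :: "real poly \<Rightarrow> Ry \<Rightarrow> Ry" where
  "peval P u = poly (map_poly const1 P) u"

lemma peval_pCons: "peval (pCons a P) u = const1 a + u * peval P u"
  by (simp add: peval_def map_poly_pCons)

lemma peval_0 [simp]: "peval 0 u = 0"
  by (simp add: peval_def)

lemma peval_const: "peval [:a:] u = const1 a"
  by (simp add: peval_pCons)

lemma peval_add: "peval (P + Q) u = peval P u + peval Q u"
proof -
  have "map_poly const1 (P + Q) = map_poly const1 P + map_poly const1 Q"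
    by (intro poly_eqI) (simp add: coeff_map_poly const1_add)
  then show ?thesis by (simp add: peval_def)
qed

lemma peval_mult: "peval (P * Q) u = peval P u * peval Q u"
proof (induction P rule: pCons_induct)
  case (pCons a P)
  have "peval (smult a Q) u = const1 a * peval Q u"
    by (simp add: peval_def map_poly_smult const1_mult)
  with pCons show ?case by (simp add: peval_pCons peval_add algebra_simps)
qed simp

lemma peval_X_power: "peval ([:0, 1:] ^ k) u = u ^ k"
  by (induction k) (simp_all add: peval_mult peval_pCons one_pCons)

lemma peval_monom: "peval (monom a n) u = const1 a * u ^ n"
  by (simp add: peval_def map_poly_monom poly_monom)

lemma (in Ry_place) peval: "\<phi> u = Some t \<Longrightarrow> \<phi> (peval P u) = Some (poly P t)"
  by (induction P rule: pCons_induct) (simp_all add: peval_pCons zero const1 add mult)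

lemma Fract_eq_peval_y1: "Fract p 1 = peval p y1"
proof (induction p rule: pCons_induct)
  case (pCons a p)
  have "Fract (pCons a p) 1 = Fract ([:a:] + [:0, 1:] * p) 1" by simp
  also have "\<dots> = const1 a + y1 * Fract p 1" by (simp add: const1_def y1_def)
  finally show ?case using pCons by (simp add: peval_pCons)
qed (simp add: Zero_fract_def)

section \<open>Evaluation places of \<open>\<real>(y)\<close>\<close>

lemma coprime_no_common_root:
  fixes p q :: "real poly"
  assumes "coprime p q" "poly p c = 0"
  shows "poly q c \<noteq> 0"
proof
  assume "poly q c = 0"
  then have "is_unit [:- c, 1:]"
    using assms coprime_common_divisor poly_eq_0_iff_dvd by blast
  then show False by (simp add: is_unit_poly_iff)
qed

text \<open>\<open>quot_of_fract\<close> is the coprime representative, so numerator and denominator have no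
  common root.\<close>
definition eval_place :: "real \<Rightarrow> Ry \<Rightarrow> real option" where
  "eval_place c h = (case quot_of_fract h of (p, q) \<Rightarrow>
     if poly q c = 0 then None else Some (poly p c / poly q c))"

lemma eval_place_Fract:
  assumes "poly q c \<noteq> 0"
  shows "eval_place c (Fract p q) = Some (poly p c / poly q c)"
proof -
  obtain p' q' where pq': "quot_of_fract (Fract p q) = (p', q')" by fastforce
  then have eq: "Fract p' q' = Fract p q" and "q' \<noteq> 0" and "coprime p' q'"
    using Fract_quot_of_fract[of "Fract p q"] snd_quot_of_fract_nonzero[of "Fract p q"]
      coprime_quot_of_fract[of "Fract p q"] by simp_all
  have "q \<noteq> 0" using assms by auto
  then have "poly p' c * poly q c = poly p c * poly q' c"
    using eq eq_fract(1)[OF \<open>q' \<noteq> 0\<close>] by (metis poly_mult)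
  moreover have "poly q' c \<noteq> 0"
    using calculation assms coprime_no_common_root[OF \<open>coprime p' q'\<close>] by force
  ultimately show ?thesis
    using assms pq' by (simp add: eval_place_def field_simps)
qed

lemma eval_place_SomeE:
  assumes "eval_place c h = Some s"
  obtains p q where "h = Fract p q" "poly q c \<noteq> 0" "s = poly p c / poly q c"
proof -
  obtain p q where pq: "quot_of_fract h = (p, q)" by fastforce
  with assms have "poly q c \<noteq> 0" "s = poly p c / poly q c"
    by (auto simp: eval_place_def split: if_splits)
  moreover have "h = Fract p q" using Fract_quot_of_fract[of h] pq by simp
  ultimately show ?thesis using that by blast
qed

lemma eval_place_NoneE:
  assumes "eval_place c h = None"
  obtains p q where "h = Fract p q" "poly q c = 0" "poly p c \<noteq> 0"
proof -
  obtain p q where pq: "quot_of_fract h = (p, q)" by fastforce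
  then have "h = Fract p q" "poly q c = 0"
    using assms Fract_quot_of_fract[of h] by (auto simp: eval_place_def split: if_splits)
  moreover have "poly p c \<noteq> 0"
    using coprime_no_common_root[of q p c] coprime_quot_of_fract[of h] pq calculation(2)
    by (auto simp: coprime_commute)
  ultimately show ?thesis by (rule that)
qed

lemma eval_place_add_mult:
  assumes "eval_place c a = Some s" "eval_place c b = Some t"
  shows "eval_place c (a + b) = Some (s + t)" "eval_place c (a * b) = Some (s * t)"
proof -
  obtain p q where a: "a = Fract p q" "poly q c \<noteq> 0" "s = poly p c / poly q c"
    using eval_place_SomeE[OF assms(1)] .
  obtain p' q' where b: "b = Fract p' q'" "poly q' c \<noteq> 0" "t = poly p' c / poly q' c"
    using eval_place_SomeE[OF assms(2)] .
  have "q \<noteq> 0" "q' \<noteq> 0" using a(2) b(2) by auto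
  then have "a + b = Fract (p * q' + p' * q) (q * q')" "a * b = Fract (p * p') (q * q')"
    using a(1) b(1) by simp_all
  moreover have "poly (q * q') c \<noteq> 0" using a(2) b(2) by simp
  ultimately show "eval_place c (a + b) = Some (s + t)" "eval_place c (a * b) = Some (s * t)"
    unfolding a(3) b(3) by (simp_all add: eval_place_Fract add_frac_eq)
qed

lemma real_place_eval_place: "real_place (eval_place c)"
proof -
  have zero: "eval_place c 0 = Some 0" and one: "eval_place c 1 = Some 1"
    using eval_place_Fract[of 1 c 0] eval_place_Fract[of 1 c 1]
    by (simp_all add: Zero_fract_def One_fract_def)
  have "eval_place c a = None \<longleftrightarrow> eval_place c (inverse a) = Some 0" if "a \<noteq> 0" for a
  proof
    assume "eval_place c a = None"
    then obtain p q where "a = Fract p q" "poly q c = 0" "poly p c \<noteq> 0"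
      by (rule eval_place_NoneE)
    then show "eval_place c (inverse a) = Some 0" by (auto simp: eval_place_Fract)
  next
    assume inv: "eval_place c (inverse a) = Some 0"
    show "eval_place c a = None"
    proof (rule ccontr)
      assume "eval_place c a \<noteq> None"
      then obtain s where "eval_place c a = Some s" by blast
      then have "eval_place c (a * inverse a) = Some 0"
        using eval_place_add_mult(2)[OF _ inv] by simp
      then show False using one \<open>a \<noteq> 0\<close> by simp
    qed
  qed
  then show ?thesis using zero one eval_place_add_mult unfolding real_place_def by force
qed

lemma eval_place_y1: "eval_place c y1 = Some c"
  using eval_place_Fract[of 1 c "[:0, 1:]"] by (simp add: y1_def)

section \<open>Places of \<open>\<real>(y)\<close> as limits of evaluation places\<close>

definition generates_Ry :: "Ry \<Rightarrow> bool" where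
  "generates_Ry u \<longleftrightarrow> (\<forall>h. \<exists>P Q. peval Q u \<noteq> 0 \<and> h * peval Q u = peval P u)"

lemma generates_RyI:
  fixes u :: Ry
  assumes poly: "\<And>p. \<exists>P k. Fract p 1 * u ^ k = peval P u" and "u \<noteq> 0"
  shows "generates_Ry u"
  unfolding generates_Ry_def
proof
  fix h :: Ry
  obtain p q where pq: "h = Fract p q" "q \<noteq> 0" by (cases h) auto
  have hq: "h * Fract q 1 = Fract p 1" using pq by (simp add: eq_fract)
  obtain P k where P: "Fract p 1 * u ^ k = peval P u" using poly by blast
  obtain Q j where Q: "Fract q 1 * u ^ j = peval Q u" using poly by blast
  have "peval (Q * [:0, 1:] ^ k) u = Fract q 1 * u ^ j * u ^ k"
    using Q by (simp add: peval_mult peval_X_power)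
  moreover have "Fract q 1 \<noteq> 0" using pq(2) by (simp add: Zero_fract_def eq_fract)
  then have "Fract q 1 * u ^ j * u ^ k \<noteq> 0" using \<open>u \<noteq> 0\<close> by simp
  moreover have "h * (Fract q 1 * u ^ j * u ^ k) = (h * Fract q 1) * u ^ k * u ^ j"
    by (simp add: algebra_simps)
  then have "h * (Fract q 1 * u ^ j * u ^ k) = peval (P * [:0, 1:] ^ j) u"
    using hq P by (simp add: peval_mult peval_X_power)
  ultimately show "\<exists>P Q. peval Q u \<noteq> 0 \<and> h * peval Q u = peval P u" by metis
qed

lemma Fract_eq_peval_shift: "Fract p 1 = peval (pcompose p [:b, 1:]) (y1 - const1 b)"
proof (induction p rule: pCons_induct)
  case (pCons a p)
  have "Fract (pCons a p) 1 = const1 a + y1 * Fract p 1"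
    using Fract_eq_peval_y1[of "pCons a p"] Fract_eq_peval_y1[of p] by (simp add: peval_pCons)
  also have "\<dots> = const1 a + (const1 b + (y1 - const1 b)) * peval (pcompose p [:b, 1:]) (y1 - const1 b)"
    using pCons by simp
  also have "\<dots> = peval (pcompose (pCons a p) [:b, 1:]) (y1 - const1 b)"
    by (simp only: pcompose_pCons peval_add peval_mult peval_const) (simp add: peval_pCons)
  finally show ?case .
qed (simp add: Zero_fract_def)

lemma y1_nonzero: "y1 \<noteq> 0"
  by (simp add: y1_def Zero_fract_def eq_fract)

lemma Fract_mult_inverse_y1_power: "\<exists>P k. Fract p 1 * inverse y1 ^ k = peval P (inverse y1)"
proof (induction p rule: pCons_induct)
  case (pCons a p)
  then obtain P k where Pk: "Fract p 1 * inverse y1 ^ k = peval P (inverse y1)" by blast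
  have "Fract (pCons a p) 1 = const1 a + y1 * Fract p 1"
    using Fract_eq_peval_y1[of "pCons a p"] Fract_eq_peval_y1[of p] by (simp add: peval_pCons)
  then have "Fract (pCons a p) 1 * inverse y1 ^ Suc k
      = const1 a * inverse y1 ^ Suc k + (y1 * inverse y1) * (Fract p 1 * inverse y1 ^ k)"
    by (simp add: algebra_simps)
  also have "\<dots> = peval (monom a (Suc k) + P) (inverse y1)"
    using y1_nonzero Pk by (simp add: peval_add peval_monom)
  finally show ?case by blast
qed (auto intro: exI[of _ 0] simp: Zero_fract_def)

lemma generates_Ry_shift: "generates_Ry (y1 - const1 b)"
proof (rule generates_RyI)
  show "\<exists>P k. Fract p 1 * (y1 - const1 b) ^ k = peval P (y1 - const1 b)" for p
    using Fract_eq_peval_shift[of p b] by (metis mult_1_right power_0)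
  interpret e: Ry_place "eval_place (b + 1)" by (rule Ry_placeI[OF real_place_eval_place])
  have "eval_place (b + 1) (y1 - const1 b) = Some 1"
    using e.diff[OF eval_place_y1 e.const1] by simp
  then show "y1 - const1 b \<noteq> 0" by (rule e.nonzero) simp
qed

lemma generates_Ry_inverse_y1: "generates_Ry (inverse y1)"
  using generates_RyI[OF Fract_mult_inverse_y1_power] y1_nonzero by simp

lemma poly_eq_X_power_mult:
  fixes P :: "real poly"
  assumes "P \<noteq> 0"
  obtains m P1 where "P = [:0, 1:] ^ m * P1" "poly P1 0 \<noteq> 0"
  using order_decomp[OF assms, of 0] poly_eq_0_iff_dvd[of _ 0] that by auto

context Ry_place
begin

text \<open>Since \<open>h\<close> is a unit at \<open>\<phi>\<close>, the polynomials in \<open>u\<close> on both sides vanish to the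
  same order at \<open>u = 0\<close>, and the powers of \<open>u\<close> cancel.\<close>
lemma unit_as_polynomial_ratio:
  assumes "generates_Ry u" "u \<noteq> 0" "\<phi> u = Some 0" and h: "\<phi> h = Some r" "r \<noteq> 0"
  obtains P Q where "poly Q 0 \<noteq> 0" "h * peval Q u = peval P u" "r = poly P 0 / poly Q 0"
proof -
  obtain P Q where PQ: "peval Q u \<noteq> 0" "h * peval Q u = peval P u"
    using assms(1) unfolding generates_Ry_def by blast
  have "h \<noteq> 0" using nonzero[OF h] .
  then have "P \<noteq> 0" "Q \<noteq> 0" using PQ by auto
  obtain m P1 where P1: "P = [:0, 1:] ^ m * P1" "poly P1 0 \<noteq> 0"
    using poly_eq_X_power_mult[OF \<open>P \<noteq> 0\<close>] .
  obtain k Q1 where Q1: "Q = [:0, 1:] ^ k * Q1" "poly Q1 0 \<noteq> 0"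
    using poly_eq_X_power_mult[OF \<open>Q \<noteq> 0\<close>] .
  have eq: "u ^ k * (h * peval Q1 u) = u ^ m * peval P1 u"
    using PQ(2) unfolding P1(1) Q1(1) by (simp add: peval_mult peval_X_power algebra_simps)
  have P1u: "\<phi> (peval P1 u) = Some (poly P1 0)" and hQ1u: "\<phi> (h * peval Q1 u) = Some (r * poly Q1 0)"
    using peval[OF assms(3)] mult[OF h(1) peval[OF assms(3)]] by simp_all
  have "m = k"
  proof (rule ccontr)
    assume "m \<noteq> k"
    then consider "k < m" | "m < k" by linarith
    then show False
    proof cases
      case 1
      then have "u ^ m = u ^ k * u ^ (m - k)" by (simp flip: power_add)
      then have "h * peval Q1 u = u ^ (m - k) * peval P1 u"
        using eq \<open>u \<noteq> 0\<close> by (simp add: mult.assoc)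
      then show False
        using mult[OF power[OF assms(3)] P1u, of "m - k"] hQ1u 1 h(2) Q1(2) by (simp add: power_0_left)
    next
      case 2
      then have "u ^ k = u ^ m * u ^ (k - m)" by (simp flip: power_add)
      then have "u ^ (k - m) * (h * peval Q1 u) = peval P1 u"
        using eq \<open>u \<noteq> 0\<close> by (simp add: mult.assoc)
      then show False
        using mult[OF power[OF assms(3)] hQ1u, of "k - m"] P1u 2 P1(2) by (simp add: power_0_left)
    qed
  qed
  then have "h * peval Q1 u = peval P1 u" using eq \<open>u \<noteq> 0\<close> by simp
  moreover have "r = poly P1 0 / poly Q1 0"
    using calculation hQ1u P1u Q1(2) by (simp add: field_simps)
  ultimately show ?thesis using that Q1(2) by blast
qed

lemma eventually_positive_near:
  fixes Z :: "real \<Rightarrow> Ry \<Rightarrow> real option"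
  assumes "generates_Ry u" "\<phi> u = Some 0"
    and Z: "\<And>t. t \<noteq> 0 \<Longrightarrow> real_place (Z t) \<and> Z t u = Some t"
    and h: "\<phi> h = Some r" "r > 0"
  shows "\<forall>\<^sub>F t in at 0. \<exists>r'. Z t h = Some r' \<and> r' > 0"
proof -
  have "u \<noteq> 0" using Z[of 1] R_place.zero[OF R_place.intro, of "Z 1"] by auto
  then obtain P Q where PQ: "poly Q 0 \<noteq> 0" "h * peval Q u = peval P u" "r = poly P 0 / poly Q 0"
    using unit_as_polynomial_ratio[OF assms(1) _ assms(2) h(1)] h(2) by blast
  have "((\<lambda>t. poly P t / poly Q t) \<longlongrightarrow> r) (at 0)"
    using PQ(1,3) by (auto intro!: tendsto_eq_intros)
  then have "\<forall>\<^sub>F t in at 0. poly P t / poly Q t > 0" using h(2) order_tendstoD(1) by blast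
  moreover have "\<forall>\<^sub>F t in at 0. poly Q t \<noteq> 0"
    using tendsto_imp_eventually_ne[OF poly_isCont[where p = Q and x = 0, unfolded isCont_def] PQ(1)]
    by simp
  moreover have "\<forall>\<^sub>F t in at (0::real). t \<noteq> 0" by (simp add: eventually_at_filter)
  ultimately show ?thesis
  proof eventually_elim
    case (elim t)
    interpret Zt: Ry_place "Z t" using Z elim by (simp add: Ry_placeI)
    have "Z t (h * peval Q u) = Some (poly P t)" using Zt.peval Z elim PQ(2) by simp
    then have "Z t h = Some (poly P t / poly Q t)"
      using Zt.mult_right_cancel Zt.peval Z elim by blast
    then show ?case using elim by blast
  qed
qed

lemma eventually_in_open_near:
  fixes Z :: "real \<Rightarrow> Ry \<Rightarrow> real option"
  assumes "generates_Ry u" "\<phi> u = Some 0"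
    and Z: "\<And>t. t \<noteq> 0 \<Longrightarrow> real_place (Z t) \<and> Z t u = Some t"
    and "openin place_topology U" "\<phi> \<in> U"
  shows "\<forall>\<^sub>F t in at 0. Z t \<in> U"
proof -
  have "generate_topology_on (range Hsub) U"
    using assms(4) unfolding place_topology_def by (rule openin_topology_generated_by)
  then show ?thesis using \<open>\<phi> \<in> U\<close>
  proof (induction rule: generate_topology_on.induct)
    case (Int a b)
    then show ?case by (auto intro: eventually_conj[THEN eventually_mono])
  next
    case (UN K)
    then obtain k where "k \<in> K" "\<phi> \<in> k" by auto
    with UN.IH have "\<forall>\<^sub>F t in at 0. Z t \<in> k" by blast
    then show ?case by (rule eventually_mono) (use \<open>k \<in> K\<close> in auto)
  next
    case (Basis s)
    then obtain h r where s: "s = Hsub h" and h: "\<phi> h = Some r" "r > 0"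
      by (auto simp: Hsub_def)
    have "\<forall>\<^sub>F t in at (0::real). t \<noteq> 0" by (simp add: eventually_at_filter)
    from eventually_conj[OF this eventually_positive_near[OF assms(1,2) Z h]] show ?case
      by (rule eventually_mono) (use Z in \<open>auto simp: s Hsub_def places_def\<close>)
  qed simp
qed

end

definition y_parameter :: "(Ry \<Rightarrow> real option) \<Rightarrow> Ry" where
  "y_parameter \<zeta> = (case \<zeta> y1 of Some b \<Rightarrow> y1 - const1 b | None \<Rightarrow> inverse y1)"

text \<open>The place \<open>y \<mapsto> b + t\<close>, resp. \<open>y \<mapsto> 1/t\<close>, when \<open>\<zeta>(y) = b\<close>, resp. \<open>\<zeta>(y) = \<infinity>\<close>;
  it tends to \<open>\<zeta>\<close> as \<open>t \<rightarrow> 0\<close>.\<close>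
definition nearby_place :: "(Ry \<Rightarrow> real option) \<Rightarrow> real \<Rightarrow> Ry \<Rightarrow> real option" where
  "nearby_place \<zeta> t = (case \<zeta> y1 of Some b \<Rightarrow> eval_place (b + t) | None \<Rightarrow> eval_place (inverse t))"

lemma real_place_nearby_place: "real_place (nearby_place \<zeta> t)"
  by (simp add: nearby_place_def real_place_eval_place split: option.split)

lemma generates_Ry_y_parameter: "generates_Ry (y_parameter \<zeta>)"
  by (simp add: y_parameter_def generates_Ry_shift generates_Ry_inverse_y1 split: option.split)

lemma nearby_place_y_parameter: "t \<noteq> 0 \<Longrightarrow> nearby_place \<zeta> t (y_parameter \<zeta>) = Some t"
proof (cases "\<zeta> y1")
  case None
  interpret e: R_place "eval_place (inverse t)" by (rule R_place.intro[OF real_place_eval_place])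
  assume "t \<noteq> 0"
  then show ?thesis
    using None e.inverse[OF eval_place_y1] by (simp add: nearby_place_def y_parameter_def)
next
  case (Some b)
  interpret e: Ry_place "eval_place (b + t)" by (rule Ry_placeI[OF real_place_eval_place])
  show ?thesis
    using Some e.diff[OF eval_place_y1 e.const1] by (simp add: nearby_place_def y_parameter_def)
qed

lemma (in Ry_place) y_parameter: "\<phi> (y_parameter \<phi>) = Some 0"
  using diff[OF _ const1] inverse_of_None by (auto simp: y_parameter_def split: option.split)

lemma (in Ry_place) eventually_nearby_place_in:
  assumes "openin place_topology U" "\<phi> \<in> U"
  shows "\<forall>\<^sub>F t in at 0. nearby_place \<phi> t \<in> U"
  by (rule eventually_in_open_near[OF generates_Ry_y_parameter y_parameter _ assms])
    (simp add: real_place_nearby_place nearby_place_y_parameter)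

lemma topspace_place_topology: "topspace place_topology = places"
proof -
  have "\<phi> \<in> Hsub 1" if "\<phi> \<in> places" for \<phi> :: "'k::field \<Rightarrow> real option"
    using that R_place.one[OF R_place.intro, of \<phi>] by (simp add: Hsub_def places_def)
  then show ?thesis by (auto simp: place_topology_def Hsub_def)
qed

lemma openin_Hsub: "openin place_topology (Hsub b)"
  unfolding place_topology_def by (rule topology_generated_by_Basis) simp

lemma emb_y_diff: "emb_y (a - b) = emb_y a - emb_y b"
  by (simp add: emb_y_def)

lemma emb_y_inverse: "emb_y (inverse a) = inverse (emb_y a)"
  by (cases "a = 0") (simp_all add: emb_y_def eq_fract fract_collapse)

lemma loc_par_yvar: "\<xi> yvar = \<zeta> y1 \<Longrightarrow> loc_par \<xi> yvar = emb_y (y_parameter \<zeta>)"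
  by (simp add: loc_par_def y_parameter_def yvar_def const2_def emb_y_diff emb_y_inverse
      split: option.split)

lemma Fract_map_const1_in_Rx: "q \<noteq> 0 \<Longrightarrow> Fract (map_poly const1 p) (map_poly const1 q) \<in> Rx_sub"
  unfolding Rx_sub_def by blast

lemma loc_par_xvar_in_Rx: "loc_par \<xi> xvar \<in> Rx_sub"
proof -
  have "xvar - const2 a \<in> Rx_sub" for a
    using Fract_map_const1_in_Rx[of 1 "[:- a, 1:]"]
    by (simp add: xvar_def const2_def emb_y_def map_poly_pCons const1_uminus)
  moreover have "inverse xvar \<in> Rx_sub"
    using Fract_map_const1_in_Rx[of "[:0, 1:]" 1] by (simp add: xvar_def map_poly_pCons)
  ultimately show ?thesis by (simp add: loc_par_def split: option.split)
qed

theorem proposition6p4: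
  fixes \<iota> :: "(Ry \<Rightarrow> real option) \<Rightarrow> (Rxy \<Rightarrow> real option)"
  assumes maps: "\<iota> ` places \<subseteq> places"
    and inj: "inj_on \<iota> places"
    and compat: "\<And>\<zeta> f. \<zeta> \<in> places \<Longrightarrow> \<iota> \<zeta> (emb_y f) = \<zeta> f"
    and same_x: "\<And>\<zeta>1 \<zeta>2 g. \<zeta>1 \<in> places \<Longrightarrow> \<zeta>2 \<in> places \<Longrightarrow> g \<in> Rx_sub \<Longrightarrow> \<iota> \<zeta>1 g = \<iota> \<zeta>2 g"
    and xi: "\<xi> \<in> \<iota> ` places"
    and n: "val_less \<xi> 1 (loc_par \<xi> xvar) \<and> val_less \<xi> (loc_par \<xi> xvar) ((loc_par \<xi> yvar) ^ (n::nat))"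
  shows "\<not> continuous_map place_topology place_topology \<iota>"
proof
  assume cont: "continuous_map place_topology place_topology \<iota>"
  obtain \<zeta> where \<zeta>: "\<zeta> \<in> places" "\<xi> = \<iota> \<zeta>" using xi by blast
  interpret \<zeta>: Ry_place \<zeta> using \<zeta>(1) by (simp add: places_def Ry_placeI)
  interpret \<xi>: R_place \<xi> using \<zeta> maps by (auto simp: places_def intro: R_place.intro)
  define X Y where "X = loc_par \<xi> xvar" and "Y = loc_par \<xi> yvar"
  have X: "\<xi> X = Some 0" "X \<noteq> 0" "\<xi> (Y ^ n / X) = Some 0"
    using n unfolding X_def Y_def val_less_def by auto
  define V where "V = {\<zeta>' \<in> places. \<iota> \<zeta>' \<in> Hsub (1 - Y ^ n / X)}"
  have "openin place_topology V"
    using cont openin_Hsub unfolding continuous_map_def topspace_place_topology V_def by blast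
  moreover have "\<zeta> \<in> V"
    using \<zeta> maps \<xi>.diff[OF \<xi>.one] X by (auto simp: V_def Hsub_def)
  ultimately have "\<forall>\<^sub>F t in at 0. nearby_place \<zeta> t \<in> V" by (rule \<zeta>.eventually_nearby_place_in)
  moreover have "\<forall>\<^sub>F t in at (0::real). t \<noteq> 0" by (simp add: eventually_at_filter)
  ultimately have "\<forall>\<^sub>F t in at 0. nearby_place \<zeta> t \<in> V \<and> t \<noteq> 0" by (rule eventually_conj)
  then obtain t where t: "t \<noteq> 0" "\<iota> (nearby_place \<zeta> t) \<in> Hsub (1 - Y ^ n / X)"
    using eventually_happens'[OF at_neq_bot] unfolding V_def by blast
  have near: "nearby_place \<zeta> t \<in> places" by (simp add: places_def real_place_nearby_place)
  interpret \<psi>: R_place "\<iota> (nearby_place \<zeta> t)" using near maps by (auto simp: places_def intro: R_place.intro)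
  have "\<iota> (nearby_place \<zeta> t) X = Some 0"
    using same_x[OF near \<zeta>(1) loc_par_xvar_in_Rx] X \<zeta>(2) by (simp add: X_def)
  moreover have "Y = emb_y (y_parameter \<zeta>)"
    using loc_par_yvar compat[OF \<zeta>(1), of y1] \<zeta>(2) by (simp add: Y_def yvar_def)
  then have "\<iota> (nearby_place \<zeta> t) (Y ^ n) = Some (t ^ n)"
    using compat[OF near] nearby_place_y_parameter[OF t(1)] \<psi>.power by simp
  ultimately have "\<iota> (nearby_place \<zeta> t) (1 - Y ^ n / X) = None"
    using \<psi>.one_minus_divide_pole X(2) t(1) by simp
  with t(2) show False by (simp add: Hsub_def)
qed

end
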